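(* Let $\nu$ be a probability density on $\mathsf{X}\subset\mathbb{R}^{d_{x}}$, for each $x\in\mathsf{X}$ let $f_{x}$ be a probability density on $\mathsf{Y}\subset\mathbb{R}^{d}$, fix $y\in\mathsf{Y}$ and $\epsilon>0$, and set $\ell_{\mathrm{ABC}}(x):=\mathbb{P}_{x}(|z-y|<\epsilon)$ for $z\sim f_{x}$, assumed positive for all $x$. Let $\pi(\mathrm{d}x)\propto\nu(x)\ell_{\mathrm{ABC}}(x)\mathrm{d}x$. For $N\in\mathbb{N}$ and $x\in\mathsf{X}$, let $z_{1},\dots,z_{N}\overset{\mathrm{iid}}{\sim}f_{x}$, $W_{j}:=1/\ell_{\mathrm{ABC}}(x)$ if $|z_{j}-y|<\epsilon$ and $W_{j}:=0$ otherwise, $\mathcal{W}_{N}:=\frac{1}{N}\sum_{j=1}^{N}W_{j}$, let $Q_{x}$ be the law of $\mathcal{W}_{N}$ and $\tilde{\pi}_{x}(\mathrm{d}w):=wQ_{x}(\mathrm{d}w)$. Let $p\in\mathbb{N}$ and suppose $\int_{\mathsf{X}}\nu(x)\ell_{\mathrm{ABC}}^{-(p-1)}(x)\,\mathrm{d}x<\infty$. Then there is $C_{N,p}>0$ such that for all $s>0$, \[ \int_{\mathsf{X}}\pi(\mathrm{d}x)\,\tilde{\pi}_{x}(\mathcal{W}_{N}\ge s)\le C_{N,p}\,s^{-p}, \] and $C_{N,p}=1+O(1/N)$ as $N\to\infty$. In particular, the hypothesis holds for $p=1$.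
   Context: $|\cdot|$ is the Euclidean norm. Under $Q_{x}$, $\mathcal{W}_{N}$ has mean $1$, and $\ell_{\mathrm{ABC}}(x)\sum_{j}W_{j}\sim\mathrm{Bin}(N,\ell_{\mathrm{ABC}}(x))$. *)

theory Defs
  imports "HOL-Analysis.Analysis" "HOL-Library.Landau_Symbols"
begin

definition fmeas :: "('x \<Rightarrow> 'y::euclidean_space \<Rightarrow> real) \<Rightarrow> 'y set \<Rightarrow> 'x \<Rightarrow> 'y measure" where
  "fmeas f Y x = density lborel (\<lambda>z. ennreal (indicator Y z * f x z))"

definition lABC :: "('x \<Rightarrow> 'y::euclidean_space \<Rightarrow> real) \<Rightarrow> 'y set \<Rightarrow> 'y \<Rightarrow> real \<Rightarrow> 'x \<Rightarrow> real" where
  "lABC f Y y \<epsilon> x = measure (fmeas f Y x) {z. norm (z - y) < \<epsilon>}"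

text \<open>The estimator W_N as a function of the sample (z_1,...,z_N), indexed by {..<N}.\<close>
definition WN :: "('x \<Rightarrow> 'y::euclidean_space \<Rightarrow> real) \<Rightarrow> 'y set \<Rightarrow> 'y \<Rightarrow> real \<Rightarrow> nat \<Rightarrow> 'x \<Rightarrow> (nat \<Rightarrow> 'y) \<Rightarrow> real" where
  "WN f Y y \<epsilon> N x \<omega> = (1 / real N) *
     (\<Sum>j<N. if norm (\<omega> j - y) < \<epsilon> then 1 / lABC f Y y \<epsilon> x else 0)"

definition Qlaw :: "('x \<Rightarrow> 'y::euclidean_space \<Rightarrow> real) \<Rightarrow> 'y set \<Rightarrow> 'y \<Rightarrow> real \<Rightarrow> nat \<Rightarrow> 'x \<Rightarrow> real measure" where
  "Qlaw f Y y \<epsilon> N x = distr (PiM {..<N} (\<lambda>_. fmeas f Y x)) borel (WN f Y y \<epsilon> N x)"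

definition pitilde :: "('x \<Rightarrow> 'y::euclidean_space \<Rightarrow> real) \<Rightarrow> 'y set \<Rightarrow> 'y \<Rightarrow> real \<Rightarrow> nat \<Rightarrow> 'x \<Rightarrow> real measure" where
  "pitilde f Y y \<epsilon> N x = density (Qlaw f Y y \<epsilon> N x) (\<lambda>w. ennreal w)"

definition piABC :: "('x::euclidean_space \<Rightarrow> real) \<Rightarrow> 'x set \<Rightarrow> ('x \<Rightarrow> 'y::euclidean_space \<Rightarrow> real) \<Rightarrow> 'y set \<Rightarrow> 'y \<Rightarrow> real \<Rightarrow> 'x measure" where
  "piABC \<nu> X f Y y \<epsilon> = density lborel (\<lambda>x. ennreal (indicator X x * \<nu> x * lABC f Y y \<epsilon> x /
       (\<integral>x'\<in>X. \<nu> x' * lABC f Y y \<epsilon> x' \<partial>lborel)))"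

end

theory Submission imports Defs "HOL-Probability.Probability" begin

text \<open>
  For fixed \<open>x\<close> the number \<open>K\<close> of hits \<open>|z_j - y| < \<epsilon>\<close> is binomial with parameters
  \<open>N\<close> and \<open>l(x)\<close>, and \<open>W_N = K / (N l(x))\<close>. The size-biased tail obeys a Markov bound,
  \<open>pitilde_x(W_N \<ge> s) = E[W_N 1{W_N \<ge> s}] \<le> E[W_N^(p+1)] / s^p\<close>. Falling factorials have exact
  binomial moments, \<open>E[K(K-1)...(K-q+1)] = N(N-1)...(N-q+1) l^q\<close>, and dominating \<open>K^(p+1)\<close>
  by them gives \<open>E[W_N^(p+1)] \<le> 1 + (p+1)^2 / (N l(x)^p)\<close>. Integrating against \<open>pi \<propto> \<nu> l\<close>
  turns the error term into \<open>(p+1)^2 \<integral> \<nu> l^(1-p) / (N Z)\<close>, finite by hypothesis and of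
  order \<open>1/N\<close>.
\<close>

section \<open>Falling factorials\<close>

fun falling_fact :: "nat \<Rightarrow> real \<Rightarrow> real" where
  "falling_fact 0 x = 1"
| "falling_fact (Suc q) x = falling_fact q x * (x - real q)"

lemma falling_fact_Suc_plus_1:
  "falling_fact (Suc q) (x + 1) = falling_fact (Suc q) x + (real q + 1) * falling_fact q x"
proof -
  have "falling_fact (Suc q) (x + 1) = (x + 1) * falling_fact q x"
    by (induction q) (auto simp: algebra_simps)
  then show ?thesis by (simp add: algebra_simps)
qed

lemma falling_fact_of_nat_eq_0: "k < q \<Longrightarrow> falling_fact q (real k) = 0"
  by (induction q) (auto simp: less_Suc_eq)

lemma falling_fact_of_nat_bounds: "0 \<le> falling_fact q (real k) \<and> falling_fact q (real k) \<le> real k ^ q"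
proof (induction q)
  case (Suc q)
  show ?case
  proof (cases "q \<le> k")
    case True
    then have "falling_fact q (real k) * (real k - real q) \<le> real k ^ q * real k"
      using Suc by (intro mult_mono) auto
    then show ?thesis using Suc True by (simp add: mult.commute)
  qed (simp add: falling_fact_of_nat_eq_0)
qed simp

lemma borel_measurable_falling_fact [measurable]: "falling_fact q \<in> borel_measurable borel"
  by (induction q) auto

lemma power_le_falling_fact:
  "real k ^ Suc q \<le> falling_fact (Suc q) (real k) + (real q + 1)^2 * real k ^ q"
proof (induction q)
  case (Suc q)
  have "real k ^ Suc (Suc q) \<le> real k * (falling_fact (Suc q) (real k) + (real q + 1)^2 * real k ^ q)"
    using Suc by (simp add: mult_left_mono)
  also have "\<dots> = falling_fact (Suc (Suc q)) (real k) + (real q + 1) * falling_fact (Suc q) (real k)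
                    + (real q + 1)^2 * real k ^ Suc q"
    by (simp add: algebra_simps)
  also have "\<dots> \<le> falling_fact (Suc (Suc q)) (real k) + (real q + 1) * real k ^ Suc q
                    + (real q + 1)^2 * real k ^ Suc q"
    using falling_fact_of_nat_bounds[of "Suc q" k] by (intro add_mono mult_left_mono) auto
  also have "\<dots> \<le> falling_fact (Suc (Suc q)) (real k) + (real (Suc q) + 1)^2 * real k ^ Suc q"
    by (simp add: power2_eq_square algebra_simps)
  finally show ?case .
qed simp

section \<open>Moments of binomial hit counts\<close>

definition hit_count :: "'a set \<Rightarrow> nat \<Rightarrow> (nat \<Rightarrow> 'a) \<Rightarrow> real" where
  "hit_count B n \<omega> = (\<Sum>j<n. indicator B (\<omega> j))"

lemma hit_count_Suc_upd: "hit_count B (Suc n) (fun_upd \<omega> n z) = hit_count B n \<omega> + indicator B z"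
  by (simp add: hit_count_def)

lemma hit_count_of_nat: "\<exists>k\<le>n. hit_count B n \<omega> = real k"
proof -
  have "hit_count B n \<omega> = real (card {j\<in>{..<n}. \<omega> j \<in> B})"
    by (auto simp: hit_count_def indicator_def sum.If_cases intro!: arg_cong[where f = card])
  moreover have "card {j\<in>{..<n}. \<omega> j \<in> B} \<le> n"
    using card_mono[of "{..<n}" "{j\<in>{..<n}. \<omega> j \<in> B}"] by auto
  ultimately show ?thesis by blast
qed

context prob_space
begin

lemma prob_space_PiM_power: "prob_space (PiM I (\<lambda>_. M))"
  by (simp add: prob_space_PiM prob_space_axioms)

context
  fixes B assumes B [measurable]: "B \<in> events"
begin

lemma integrable_hit_count:
  fixes g :: "real \<Rightarrow> real"
  assumes [measurable]: "g \<in> borel_measurable borel"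
  shows "integrable (PiM {..<n} (\<lambda>_. M)) (\<lambda>\<omega>. g (hit_count B n \<omega>))"
proof -
  interpret P: prob_space "PiM {..<n} (\<lambda>_. M)" by (rule prob_space_PiM_power)
  have "\<bar>g (hit_count B n \<omega>)\<bar> \<le> (\<Sum>k\<le>n. \<bar>g (real k)\<bar>)" for \<omega>
    using hit_count_of_nat[of n B \<omega>]
    by (auto intro!: member_le_sum[where f = "\<lambda>k. \<bar>g (real k)\<bar>", simplified])
  then show ?thesis
    by (intro P.integrable_const_bound[where B = "\<Sum>k\<le>n. \<bar>g (real k)\<bar>"]) (auto simp: hit_count_def)
qed

lemma integral_hit_count_Suc:
  fixes g :: "real \<Rightarrow> real"
  assumes g [measurable]: "g \<in> borel_measurable borel"
  shows "(\<integral>\<omega>. g (hit_count B (Suc n) \<omega>) \<partial>PiM {..<Suc n} (\<lambda>_. M)) =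
         (\<integral>\<omega>. prob B * g (hit_count B n \<omega> + 1) + (1 - prob B) * g (hit_count B n \<omega>) \<partial>PiM {..<n} (\<lambda>_. M))"
proof -
  interpret product_sigma_finite "\<lambda>_. M"
    by (simp add: product_sigma_finite_def sigma_finite_measure_axioms)
  have "{..<Suc n} = insert n {..<n}" by auto
  then have "(\<integral>\<omega>. g (hit_count B (Suc n) \<omega>) \<partial>PiM {..<Suc n} (\<lambda>_. M)) =
      (\<integral>\<omega>. (\<integral>z. g (hit_count B (Suc n) (fun_upd \<omega> n z)) \<partial>M) \<partial>PiM {..<n} (\<lambda>_. M))"
    using integrable_hit_count[OF g, of "Suc n"] by (simp add: product_integral_insert)
  also have "\<dots> = (\<integral>\<omega>. prob B * g (hit_count B n \<omega> + 1) + (1 - prob B) * g (hit_count B n \<omega>) \<partial>PiM {..<n} (\<lambda>_. M))"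
  proof (rule Bochner_Integration.integral_cong [OF refl])
    fix \<omega>
    let ?c = "hit_count B n \<omega>"
    have "(\<integral>z. g (hit_count B (Suc n) (fun_upd \<omega> n z)) \<partial>M) = (\<integral>z. g ?c + (g (?c + 1) - g ?c) * indicator B z \<partial>M)"
      unfolding hit_count_Suc_upd by (rule Bochner_Integration.integral_cong) (auto simp: indicator_def)
    also have "\<dots> = g ?c + (g (?c + 1) - g ?c) * prob B"
      by (subst Bochner_Integration.integral_add) (auto simp: prob_space less_top[symmetric])
    finally show "(\<integral>z. g (hit_count B (Suc n) (fun_upd \<omega> n z)) \<partial>M) = prob B * g (?c + 1) + (1 - prob B) * g ?c"
      by (simp add: algebra_simps)
  qed
  finally show ?thesis .
qed

lemma integral_falling_fact_hit_count:
  "(\<integral>\<omega>. falling_fact q (hit_count B n \<omega>) \<partial>PiM {..<n} (\<lambda>_. M)) = falling_fact q (real n) * prob B ^ q"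
proof (induction n arbitrary: q)
  case 0
  show ?case
    using falling_fact_of_nat_eq_0[of 0 q] prob_space.prob_space[OF prob_space_PiM_power]
    by (cases q) (auto simp: hit_count_def)
next
  case (Suc n)
  show ?case
  proof (cases q)
    case 0
    then show ?thesis using prob_space.prob_space[OF prob_space_PiM_power] by simp
  next
    case (Suc r)
    let ?P = "PiM {..<n} (\<lambda>_. M)"
    have "(\<integral>\<omega>. falling_fact q (hit_count B (Suc n) \<omega>) \<partial>PiM {..<Suc n} (\<lambda>_. M)) =
        (\<integral>\<omega>. falling_fact q (hit_count B n \<omega>) + (prob B * (real r + 1)) * falling_fact r (hit_count B n \<omega>) \<partial>?P)"
      unfolding integral_hit_count_Suc[OF borel_measurable_falling_fact] Suc falling_fact_Suc_plus_1
      by (simp add: algebra_simps)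
    also have "\<dots> = falling_fact q (real n) * prob B ^ q + (prob B * (real r + 1)) * (falling_fact r (real n) * prob B ^ r)"
      using integrable_hit_count[OF borel_measurable_falling_fact, of n] by (simp add: Suc.IH)
    also have "\<dots> = falling_fact q (real (Suc n)) * prob B ^ q"
      using falling_fact_Suc_plus_1[of r "real n"] unfolding Suc by (simp add: algebra_simps)
    finally show ?thesis .
  qed
qed

lemma integral_hit_count_power_le:
  assumes "p \<ge> 1"
  shows "(\<integral>\<omega>. hit_count B n \<omega> ^ Suc p \<partial>PiM {..<n} (\<lambda>_. M))
           \<le> (real n * prob B) ^ Suc p + (real p + 1)^2 * real n ^ p * prob B"
proof -
  let ?P = "PiM {..<n} (\<lambda>_. M)"
  let ?c = "(real p + 1)^2 * real n ^ (p - 1)"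
  have hit_power_le: "hit_count B n \<omega> ^ Suc p \<le> falling_fact (Suc p) (hit_count B n \<omega>) + ?c * hit_count B n \<omega>" for \<omega>
  proof -
    obtain k where k: "k \<le> n" "hit_count B n \<omega> = real k" using hit_count_of_nat by blast
    have "real k ^ p = real k * real k ^ (p - 1)" using assms by (cases p) auto
    also have "\<dots> \<le> real k * real n ^ (p - 1)" using k by (intro mult_left_mono power_mono) auto
    finally have "(real p + 1)^2 * real k ^ p \<le> ?c * real k"
      by (simp add: mult_left_mono mult_ac)
    then show ?thesis unfolding k(2) using power_le_falling_fact[of k p] by linarith
  qed
  have "(\<integral>\<omega>. hit_count B n \<omega> ^ Suc p \<partial>?P) \<le>
     (\<integral>\<omega>. falling_fact (Suc p) (hit_count B n \<omega>) + ?c * falling_fact 1 (hit_count B n \<omega>) \<partial>?P)"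
    using integrable_hit_count[of "\<lambda>x. falling_fact (Suc p) x + ?c * falling_fact 1 x" n]
      integrable_hit_count[of "\<lambda>x. x ^ Suc p" n] hit_power_le
    by (intro integral_mono) auto
  also have "\<dots> = falling_fact (Suc p) (real n) * prob B ^ Suc p + ?c * (real n * prob B)"
    using integrable_hit_count[OF borel_measurable_falling_fact, of n]
    by (simp add: integral_falling_fact_hit_count del: falling_fact.simps) simp
  also have "\<dots> \<le> (real n * prob B) ^ Suc p + (real p + 1)^2 * real n ^ p * prob B"
  proof -
    have "falling_fact (Suc p) (real n) * prob B ^ Suc p \<le> (real n * prob B) ^ Suc p"
      unfolding power_mult_distrib using falling_fact_of_nat_bounds[of "Suc p" n]
      by (intro mult_right_mono) (simp_all del: falling_fact.simps)
    moreover have "?c * (real n * prob B) = (real p + 1)^2 * real n ^ p * prob B"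
      using assms by (cases p) (auto simp: mult_ac)
    ultimately show ?thesis by linarith
  qed
  finally show ?thesis .
qed

end

end

lemma size_biased_tail_le_moment:
  fixes W :: "'a \<Rightarrow> real"
  assumes [measurable]: "W \<in> borel_measurable M"
    and "\<And>\<omega>. W \<omega> \<ge> 0" and "integrable M (\<lambda>\<omega>. W \<omega> ^ Suc p)" and s: "s > 0"
  shows "emeasure (density (distr M borel W) ennreal) {s..} \<le> ennreal ((\<integral>\<omega>. W \<omega> ^ Suc p \<partial>M) / s ^ p)"
proof -
  have "emeasure (density (distr M borel W) ennreal) {s..} = (\<integral>\<^sup>+ \<omega>. ennreal (W \<omega>) * indicator {s..} (W \<omega>) \<partial>M)"
    by (simp add: emeasure_density nn_integral_distr)
  also have "\<dots> \<le> (\<integral>\<^sup>+ \<omega>. ennreal (W \<omega> ^ Suc p / s ^ p) \<partial>M)"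
  proof (rule nn_integral_mono)
    fix \<omega>
    show "ennreal (W \<omega>) * indicator {s..} (W \<omega>) \<le> ennreal (W \<omega> ^ Suc p / s ^ p)"
    proof (cases "s \<le> W \<omega>")
      case True
      then have "W \<omega> * s ^ p \<le> W \<omega> * W \<omega> ^ p"
        using s by (intro mult_left_mono power_mono) auto
      then show ?thesis using True s by (simp add: ennreal_leI field_simps)
    qed simp
  qed
  also have "\<dots> = ennreal ((\<integral>\<omega>. W \<omega> ^ Suc p \<partial>M) / s ^ p)"
    using assms by (simp add: nn_integral_eq_integral)
  finally show ?thesis .
qed

lemma (in prob_space) size_biased_hit_frequency_tail:
  assumes B [measurable]: "B \<in> events" and P: "prob B > 0" and n: "n \<ge> 1" and p: "p \<ge> 1" and s: "s > 0"
  shows "emeasure (density (distr (PiM {..<n} (\<lambda>_. M)) borel (\<lambda>\<omega>. hit_count B n \<omega> / (real n * prob B))) ennreal) {s..}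
           \<le> ennreal ((1 + (real p + 1)^2 / (real n * prob B ^ p)) / s ^ p)"
proof -
  let ?P = "PiM {..<n} (\<lambda>_. M)"
  define c where "c = real n * prob B"
  have c: "c > 0" using P n by (simp add: c_def)
  have "emeasure (density (distr ?P borel (\<lambda>\<omega>. hit_count B n \<omega> / c)) ennreal) {s..}
          \<le> ennreal ((\<integral>\<omega>. (hit_count B n \<omega> / c) ^ Suc p \<partial>?P) / s ^ p)"
    using c s integrable_hit_count[OF B, of "\<lambda>x. (x / c) ^ Suc p" n]
    by (intro size_biased_tail_le_moment) (auto simp: hit_count_def sum_nonneg)
  also have "\<dots> \<le> ennreal ((1 + (real p + 1)^2 / (real n * prob B ^ p)) / s ^ p)"
  proof (intro ennreal_leI divide_right_mono)
    have "(\<integral>\<omega>. (hit_count B n \<omega> / c) ^ Suc p \<partial>?P) = (\<integral>\<omega>. hit_count B n \<omega> ^ Suc p \<partial>?P) / c ^ Suc p"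
      by (simp add: power_divide)
    also have "\<dots> \<le> (c ^ Suc p + (real p + 1)^2 * real n ^ p * prob B) / c ^ Suc p"
      using integral_hit_count_power_le[OF B p, of n] c unfolding c_def by (intro divide_right_mono) auto
    also have "\<dots> = 1 + (real p + 1)^2 / (real n * prob B ^ p)"
      using c P n unfolding c_def by (simp add: field_simps)
    finally show "(\<integral>\<omega>. (hit_count B n \<omega> / c) ^ Suc p \<partial>?P) \<le> 1 + (real p + 1)^2 / (real n * prob B ^ p)" .
  qed (use s in simp)
  finally show ?thesis unfolding c_def .
qed

lemma WN_eq_hit_count:
  "WN f Y y \<epsilon> N x = (\<lambda>\<omega>. hit_count {z. norm (z - y) < \<epsilon>} N \<omega> / (real N * lABC f Y y \<epsilon> x))"
proof
  fix \<omega>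
  have "(\<Sum>j<N. if norm (\<omega> j - y) < \<epsilon> then 1 / lABC f Y y \<epsilon> x else 0)
          = (\<Sum>j<N. indicator {z. norm (z - y) < \<epsilon>} (\<omega> j)) / lABC f Y y \<epsilon> x"
    unfolding sum_divide_distrib by (intro sum.cong) (auto simp: indicator_def)
  then show "WN f Y y \<epsilon> N x \<omega> = hit_count {z. norm (z - y) < \<epsilon>} N \<omega> / (real N * lABC f Y y \<epsilon> x)"
    by (simp add: WN_def hit_count_def)
qed

section \<open>The ABC model\<close>

locale abc_model =
  fixes \<nu> :: "'x::euclidean_space \<Rightarrow> real" and X :: "'x set"
    and f :: "'x \<Rightarrow> 'y::euclidean_space \<Rightarrow> real" and Y :: "'y set"
    and y :: 'y and \<epsilon> :: real
  assumes X_meas [measurable]: "X \<in> sets borel" and Y_meas [measurable]: "Y \<in> sets borel"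
    and \<nu>_meas [measurable]: "\<nu> \<in> borel_measurable borel"
    and \<nu>_nonneg: "\<And>x. x \<in> X \<Longrightarrow> \<nu> x \<ge> 0"
    and \<nu>_int: "set_integrable lborel X \<nu>" and \<nu>_prob: "(\<integral>x\<in>X. \<nu> x \<partial>lborel) = 1"
    and f_meas: "(\<lambda>(x, z). f x z) \<in> borel_measurable borel"
    and f_nonneg: "\<And>x z. x \<in> X \<Longrightarrow> z \<in> Y \<Longrightarrow> f x z \<ge> 0"
    and f_int: "\<And>x. x \<in> X \<Longrightarrow> set_integrable lborel Y (f x)"
    and f_prob: "\<And>x. x \<in> X \<Longrightarrow> (\<integral>z\<in>Y. f x z \<partial>lborel) = 1"
    and lABC_pos: "\<And>x. x \<in> X \<Longrightarrow> lABC f Y y \<epsilon> x > 0"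
begin

abbreviation lik :: "'x \<Rightarrow> real" where "lik \<equiv> lABC f Y y \<epsilon>"

lemma f_meas_lborel [measurable]: "(\<lambda>(x, z). f x z) \<in> borel_measurable (lborel \<Otimes>\<^sub>M lborel)"
  using f_meas by (simp add: lborel_prod)

lemma borel_measurable_f [measurable]: "f x \<in> borel_measurable borel"
  using measurable_Pair2[OF f_meas_lborel, of x] by simp

lemma prob_space_fmeas: "x \<in> X \<Longrightarrow> prob_space (fmeas f Y x)"
proof (rule prob_spaceI)
  assume x: "x \<in> X"
  have "emeasure (fmeas f Y x) (space (fmeas f Y x)) = (\<integral>\<^sup>+z. ennreal (indicator Y z * f x z) \<partial>lborel)"
    by (simp add: fmeas_def emeasure_density)
  also have "\<dots> = ennreal (\<integral>z\<in>Y. f x z \<partial>lborel)"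
    using f_int[OF x] f_nonneg[OF x] unfolding set_integrable_def set_lebesgue_integral_def
    by (subst nn_integral_eq_integral) (auto simp: indicator_def)
  finally show "emeasure (fmeas f Y x) (space (fmeas f Y x)) = 1"
    by (simp add: f_prob[OF x])
qed

lemma lABC_le_1: "x \<in> X \<Longrightarrow> lik x \<le> 1"
  using prob_space.prob_le_1[OF prob_space_fmeas] by (simp add: lABC_def)

lemma borel_measurable_lABC [measurable]: "lik \<in> borel_measurable borel"
proof -
  have "lik = (\<lambda>x. enn2real (\<integral>\<^sup>+z. ennreal (indicator Y z * f x z) * indicator {z. norm (z - y) < \<epsilon>} z \<partial>lborel))"
    by (simp add: fun_eq_iff lABC_def fmeas_def measure_def emeasure_density)
  then show ?thesis by simp
qed

lemma integrable_\<nu>_lABC: "integrable lborel (\<lambda>x. indicator X x * \<nu> x * lik x)"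
proof (rule Bochner_Integration.integrable_bound)
  show "integrable lborel (\<lambda>x. indicator X x * \<nu> x)"
    using \<nu>_int by (simp add: set_integrable_def)
  show "AE x in lborel. norm (indicator X x * \<nu> x * lik x) \<le> norm (indicator X x * \<nu> x)"
  proof (intro AE_I2)
    fix x
    have "0 \<le> \<nu> x * lik x" "\<nu> x * lik x \<le> \<nu> x" if "x \<in> X"
      using \<nu>_nonneg[OF that] lABC_pos[OF that] lABC_le_1[OF that] by (simp_all add: mult_left_le)
    then show "norm (indicator X x * \<nu> x * lik x) \<le> norm (indicator X x * \<nu> x)"
      by (auto simp: indicator_def)
  qed
qed simp

definition normaliser :: real where
  "normaliser = (\<integral>x\<in>X. \<nu> x * lik x \<partial>lborel)"

lemma piABC_eq: "piABC \<nu> X f Y y \<epsilon> = density lborel (\<lambda>x. ennreal (indicator X x * \<nu> x * lik x / normaliser))"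
  by (simp add: piABC_def normaliser_def)

lemma nn_integral_\<nu>_lABC: "(\<integral>\<^sup>+x. ennreal (indicator X x * \<nu> x * lik x) \<partial>lborel) = ennreal normaliser"
  using integrable_\<nu>_lABC \<nu>_nonneg lABC_pos unfolding normaliser_def set_lebesgue_integral_def
  by (subst nn_integral_eq_integral) (auto simp: indicator_def mult.assoc less_imp_le)

lemma normaliser_pos: "normaliser > 0"
proof -
  have nonneg: "0 \<le> indicator X x * \<nu> x * lik x" for x
    using \<nu>_nonneg lABC_pos by (simp add: indicator_def less_imp_le)
  have "normaliser \<noteq> 0"
  proof
    assume "normaliser = 0"
    then have "AE x in lborel. indicator X x * \<nu> x * lik x = 0"
      using integrable_\<nu>_lABC nonneg unfolding normaliser_def set_lebesgue_integral_def
      by (subst integral_nonneg_eq_0_iff_AE[symmetric]) (auto simp: mult.assoc)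
    then have "AE x in lborel. indicator X x * \<nu> x = 0"
      by eventually_elim (use lABC_pos in \<open>force simp: indicator_def split: if_splits\<close>)
    then have "(\<integral>x\<in>X. \<nu> x \<partial>lborel) = 0"
      unfolding set_lebesgue_integral_def by (simp add: integral_eq_zero_AE)
    then show False using \<nu>_prob by simp
  qed
  moreover have "normaliser \<ge> 0"
    using nonneg unfolding normaliser_def set_lebesgue_integral_def by (simp add: mult.assoc)
  ultimately show ?thesis by simp
qed

lemma pitilde_tail_le:
  assumes x: "x \<in> X" and N: "N \<ge> 1" and p: "p \<ge> 1" and s: "s > 0"
  shows "emeasure (pitilde f Y y \<epsilon> N x) {s..} \<le> ennreal ((1 + (real p + 1)^2 / (real N * lik x ^ p)) * s powr - real p)"
proof -
  interpret prob_space "fmeas f Y x" by (rule prob_space_fmeas[OF x])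
  have "lik x = prob {z. norm (z - y) < \<epsilon>}" by (simp add: lABC_def)
  moreover have "{z. norm (z - y) < \<epsilon>} \<in> events" by (simp add: fmeas_def)
  ultimately show ?thesis
    using size_biased_hit_frequency_tail[of "{z. norm (z - y) < \<epsilon>}" N p s] lABC_pos[OF x] N p s
    by (simp add: pitilde_def Qlaw_def WN_eq_hit_count powr_minus_divide powr_realpow)
qed

definition inverse_moment :: "nat \<Rightarrow> ennreal" where
  "inverse_moment p = (\<integral>\<^sup>+x\<in>X. ennreal (\<nu> x * lik x powr (- (real p - 1))) \<partial>lborel)"

lemma tail_integral_le_nn_integral:
  assumes N: "N \<ge> 1" and p: "p \<ge> 1" and s: "s > 0"
  shows "(\<integral>\<^sup>+x. emeasure (pitilde f Y y \<epsilon> N x) {s..} \<partial>piABC \<nu> X f Y y \<epsilon>)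
           \<le> (\<integral>\<^sup>+x. ennreal (indicator X x * \<nu> x * lik x / normaliser)
                    * ennreal ((1 + (real p + 1)^2 / (real N * lik x ^ p)) * s powr - real p) \<partial>lborel)"
proof -
  define d where "d = (\<lambda>x. ennreal (indicator X x * \<nu> x * lik x / normaliser))"
  define h where "h = (\<lambda>x. ennreal ((1 + (real p + 1)^2 / (real N * lik x ^ p)) * s powr - real p))"
  have d_meas: "d \<in> borel_measurable lborel" and h_meas: "h \<in> borel_measurable lborel"
    unfolding d_def h_def by measurable
  have "(\<integral>\<^sup>+x. emeasure (pitilde f Y y \<epsilon> N x) {s..} \<partial>piABC \<nu> X f Y y \<epsilon>) \<le> (\<integral>\<^sup>+x. h x \<partial>density lborel d)"
    unfolding piABC_eq d_def[symmetric]
  proof (rule nn_integral_mono_AE)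
    show "AE x in density lborel d. emeasure (pitilde f Y y \<epsilon> N x) {s..} \<le> h x"
    proof (subst AE_density[OF d_meas], intro AE_I2 impI)
      fix x assume "0 < d x"
      then have "x \<in> X" by (cases "x \<in> X") (auto simp: d_def)
      then show "emeasure (pitilde f Y y \<epsilon> N x) {s..} \<le> h x"
        unfolding h_def using pitilde_tail_le N p s by blast
    qed
  qed
  also have "\<dots> = (\<integral>\<^sup>+x. d x * h x \<partial>lborel)"
    using d_meas h_meas by (rule nn_integral_density)
  finally show ?thesis unfolding d_def h_def .
qed

lemma tail_integral_le:
  assumes N: "N \<ge> 1" and p: "p \<ge> 1" and s: "s > 0" and finite: "inverse_moment p < \<infinity>"
  shows "(\<integral>\<^sup>+x. emeasure (pitilde f Y y \<epsilon> N x) {s..} \<partial>piABC \<nu> X f Y y \<epsilon>)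
           \<le> ennreal ((1 + (real p + 1)^2 * enn2real (inverse_moment p) / normaliser / real N) * s powr - real p)"
proof -
  let ?Z = normaliser and ?t = "s powr - real p" and ?K = "(real p + 1)^2"
  define A where "A = enn2real (inverse_moment p)"
  have Z: "?Z > 0" by (rule normaliser_pos)
  have A: "inverse_moment p = ennreal A" and A_nonneg: "A \<ge> 0"
    using finite by (simp_all add: A_def less_top)
  note tail_integral_le_nn_integral[OF N p s]
  also have "(\<integral>\<^sup>+x. ennreal (indicator X x * \<nu> x * lik x / ?Z) * ennreal ((1 + ?K / (real N * lik x ^ p)) * ?t) \<partial>lborel)
      = (\<integral>\<^sup>+x. ennreal (?t / ?Z) * ennreal (indicator X x * \<nu> x * lik x)
               + ennreal (?t * ?K / (real N * ?Z)) * (ennreal (\<nu> x * lik x powr (- (real p - 1))) * indicator X x) \<partial>lborel)"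
  proof (rule nn_integral_cong)
    fix x
    show "ennreal (indicator X x * \<nu> x * lik x / ?Z) * ennreal ((1 + ?K / (real N * lik x ^ p)) * ?t)
        = ennreal (?t / ?Z) * ennreal (indicator X x * \<nu> x * lik x)
            + ennreal (?t * ?K / (real N * ?Z)) * (ennreal (\<nu> x * lik x powr (- (real p - 1))) * indicator X x)"
    proof (cases "x \<in> X")
      case True
      have l: "lik x > 0" and \<nu>: "\<nu> x \<ge> 0" using lABC_pos[OF True] \<nu>_nonneg[OF True] .
      have "lik x powr (- (real p - 1)) = lik x / lik x ^ p"
        using l by (simp add: powr_diff[of _ 1 "real p", simplified] powr_realpow)
      moreover have "\<nu> x * lik x / ?Z * ((1 + ?K / (real N * lik x ^ p)) * ?t)
          = ?t / ?Z * (\<nu> x * lik x) + ?t * ?K / (real N * ?Z) * (\<nu> x * (lik x / lik x ^ p))"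
        using l Z N by (simp add: field_simps)
      ultimately show ?thesis
        using True l \<nu> Z N s
        by (simp add: ennreal_mult[symmetric] ennreal_plus[symmetric] del: ennreal_plus)
    qed simp
  qed
  also have "\<dots> = ennreal (?t / ?Z) * ennreal ?Z + ennreal (?t * ?K / (real N * ?Z)) * ennreal A"
    by (subst nn_integral_add) (auto simp: nn_integral_cmult nn_integral_\<nu>_lABC A[symmetric] inverse_moment_def)
  also have "\<dots> = ennreal ((1 + ?K * A / ?Z / real N) * ?t)"
    using Z N A_nonneg s
    by (simp add: ennreal_mult[symmetric] ennreal_plus[symmetric] field_simps del: ennreal_plus)
  finally show ?thesis unfolding A_def .
qed

lemma tail_integral_bound_exists:
  assumes p: "p \<ge> 1" and finite: "inverse_moment p < \<infinity>"
  shows "\<exists>C :: nat \<Rightarrow> real.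
           (\<forall>N\<ge>1. C N > 0 \<and>
              (\<forall>s>0. (\<integral>\<^sup>+x. emeasure (pitilde f Y y \<epsilon> N x) {s..} \<partial>piABC \<nu> X f Y y \<epsilon>)
                      \<le> ennreal (C N * s powr (- real p)))) \<and>
           (\<lambda>N. C N - 1) \<in> O[sequentially](\<lambda>N. 1 / real N)"
proof -
  define c where "c = (real p + 1)^2 * enn2real (inverse_moment p) / normaliser"
  have c: "c \<ge> 0" using normaliser_pos by (simp add: c_def)
  show ?thesis
  proof (intro exI[of _ "\<lambda>N. 1 + c / real N"] conjI allI impI)
    fix N :: nat and s :: real
    assume "N \<ge> 1" and "s > 0"
    then show "(\<integral>\<^sup>+x. emeasure (pitilde f Y y \<epsilon> N x) {s..} \<partial>piABC \<nu> X f Y y \<epsilon>)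
                 \<le> ennreal ((1 + c / real N) * s powr - real p)"
      using tail_integral_le[OF _ p _ finite] by (simp only: c_def)
  next
    show "(\<lambda>N. 1 + c / real N - 1) \<in> O[sequentially](\<lambda>N. 1 / real N)"
      by (intro bigoI[of _ c] always_eventually) (simp add: c)
  qed (use c in \<open>simp add: add_pos_nonneg\<close>)
qed

lemma inverse_moment_1_finite: "inverse_moment 1 < \<infinity>"
proof -
  have "inverse_moment 1 = (\<integral>\<^sup>+x. ennreal (indicator X x * \<nu> x) \<partial>lborel)"
    unfolding inverse_moment_def
    using lABC_pos by (intro nn_integral_cong) (force simp: indicator_def)
  also have "\<dots> = ennreal 1"
    using \<nu>_int \<nu>_prob \<nu>_nonneg unfolding set_integrable_def set_lebesgue_integral_def
    by (subst nn_integral_eq_integral) (auto simp: indicator_def)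
  finally show ?thesis by simp
qed

end

theorem proposition48:
  fixes \<nu> :: "'x::euclidean_space \<Rightarrow> real" and X :: "'x set"
    and f :: "'x \<Rightarrow> 'y::euclidean_space \<Rightarrow> real" and Y :: "'y set"
    and y :: 'y and \<epsilon> :: real
  assumes X_meas: "X \<in> sets lborel" and Y_meas: "Y \<in> sets lborel"
    and \<nu>_meas: "\<nu> \<in> borel_measurable borel"
    and \<nu>_nonneg: "\<And>x. x \<in> X \<Longrightarrow> \<nu> x \<ge> 0"
    and \<nu>_int: "set_integrable lborel X \<nu>" and \<nu>_prob: "(\<integral>x\<in>X. \<nu> x \<partial>lborel) = 1"
    and f_meas: "(\<lambda>(x, z). f x z) \<in> borel_measurable borel"
    and f_nonneg: "\<And>x z. x \<in> X \<Longrightarrow> z \<in> Y \<Longrightarrow> f x z \<ge> 0"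
    and f_int: "\<And>x. x \<in> X \<Longrightarrow> set_integrable lborel Y (f x)"
    and f_prob: "\<And>x. x \<in> X \<Longrightarrow> (\<integral>z\<in>Y. f x z \<partial>lborel) = 1"
    and y_in: "y \<in> Y" and eps_pos: "\<epsilon> > 0"
    and l_pos: "\<And>x. x \<in> X \<Longrightarrow> lABC f Y y \<epsilon> x > 0"
  shows "(\<forall>p::nat. p \<ge> 1 \<longrightarrow>
            (\<integral>\<^sup>+x\<in>X. ennreal (\<nu> x * lABC f Y y \<epsilon> x powr (- (real p - 1))) \<partial>lborel) < \<infinity> \<longrightarrow>
            (\<exists>C :: nat \<Rightarrow> real.
               (\<forall>N\<ge>1. C N > 0 \<and>
                  (\<forall>s>0. (\<integral>\<^sup>+x. emeasure (pitilde f Y y \<epsilon> N x) {s..} \<partial>piABC \<nu> X f Y y \<epsilon>)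
                          \<le> ennreal (C N * s powr (- real p)))) \<and>
               (\<lambda>N. C N - 1) \<in> O[sequentially](\<lambda>N. 1 / real N)))
         \<and> (\<integral>\<^sup>+x\<in>X. ennreal (\<nu> x * lABC f Y y \<epsilon> x powr (- (real (1::nat) - 1))) \<partial>lborel) < \<infinity>"
proof -
  interpret abc_model \<nu> X f Y y \<epsilon>
    using assms by unfold_locales simp_all
  show ?thesis
    using tail_integral_bound_exists inverse_moment_1_finite unfolding inverse_moment_def by blast
qed

end
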